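(* Let $d>0$, let $\mathcal{S}$ be the 4-PAM constellation, and let $\mathcal{B}\subset\{0,1\}^{2N}$ be a binary linear code with at least two codewords. (i) If $\mathcal{S}$ is labeled by $\boldsymbol{q}=[0,1,3,2]$ and $\mathcal{B}$ contains a codeword $\boldsymbol{b}''$ with $b''_2[k]=1$ for all $k=1,\dots,N$, then $\mathsf{L}(\mathcal{B})=0$. (ii) If $\mathcal{S}$ is labeled by $\boldsymbol{q}=[0,2,3,1]$ and $\mathcal{B}$ contains a codeword $\boldsymbol{b}''$ with $b''_1[k]=1$ for all $k=1,\dots,N$, then $\mathsf{L}(\mathcal{B})=0$.
   Context: $\mathcal{S}=\{s_1,s_2,s_3,s_4\}$ with $s_1=-3d$, $s_2=-d$, $s_3=d$, $s_4=3d$. A labeling is a bijection $\Phi_{\mathcal{S}}:\{0,1\}^2\to\mathcal{S}$, described by $\boldsymbol{q}=[q_1,\dots,q_4]$ where $q_i$ is the integer whose two-bit representation $[b_1,b_2]$ (most significant bit $b_1$ first) is $\Phi_{\mathcal{S}}^{-1}(s_i)$. A codeword of $\mathcal{B}$ is written $\boldsymbol{b}=[\boldsymbol{b}[1],\dots,\boldsymbol{b}[N]]$ with $\boldsymbol{b}[k]=[b_1[k],b_2[k]]$, and the CM code is $\mathcal{X}=\{[\Phi_{\mathcal{S}}(\boldsymbol{b}[1]),\dots,\Phi_{\mathcal{S}}(\boldsymbol{b}[N])]:\boldsymbol{b}\in\mathcal{B}\}$. For $\boldsymbol{x},\hat{\boldsymbol{x}}\in\mathcal{S}^N$ and each $k$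 with $x[k]\neq\hat{x}[k]$: $\mu^{\mathcal{X}}_k=\sigma^{2,\mathcal{X}}_k=(x[k]-\hat{x}[k])^2/(4d^2)$; $\mu^{\mathcal{B}}_k=\sigma^{2,\mathcal{B}}_k=(x[k]-\hat{x}[k])^2/(4d^2)$ except that if $\{x[k],\hat{x}[k]\}=\{s_1,s_4\}$ then $\mu^{\mathcal{B}}_k=3$, $\sigma^{2,\mathcal{B}}_k=1$. Summing over $k$ with $x[k]\neq\hat{x}[k]$, $a^{\mathcal{X}}(\boldsymbol{x},\hat{\boldsymbol{x}})=\sum_k\mu^{\mathcal{X}}_k/\sqrt{\sum_k\sigma^{2,\mathcal{X}}_k}$ and $a^{\mathcal{B}}(\boldsymbol{x},\hat{\boldsymbol{x}})=\sum_k\mu^{\mathcal{B}}_k/\sqrt{\sum_k\sigma^{2,\mathcal{B}}_k}$ (normalized distances of the symbol-wise ML decoder and of the bit-wise max-log decoder under the zero-crossing approximation). The asymptotic loss of the code is $\mathsf{L}(\mathcal{B})=20\log_{10}\Big(\min_{\boldsymbol{x}\neq\hat{\boldsymbol{x}}\in\mathcal{X}}a^{\mathcal{X}}(\boldsymbol{x},\hat{\boldsymbol{x}})\big/\min_{\boldsymbol{x}\neq\hat{\boldsymbol{x}}\in\mathcal{X}}a^{\mathcal{B}}(\boldsymbol{x},\hat{\boldsymbol{x}})\Big)$ dB. *)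

theory Defs
  imports Complex_Main
begin

text \<open>4-PAM constellation: s_{i+1} = pam d i for i = 0..3, i.e. -3d, -d, d, 3d.\<close>
definition pam :: "real \<Rightarrow> nat \<Rightarrow> real" where
  "pam d i = (2 * real i - 3) * d"

definition bits_val :: "bool \<times> bool \<Rightarrow> nat" where
  "bits_val bb = (if fst bb then 2 else 0) + (if snd bb then 1 else 0)"

text \<open>Labeling Phi_S described by q = [q_1,..,q_4] (0-indexed list): Phi(bb) = s_i
  where q_i is the integer with binary representation bb.\<close>
definition labeling :: "nat list \<Rightarrow> real \<Rightarrow> bool \<times> bool \<Rightarrow> real" where
  "labeling q d bb = pam d (THE i. i < 4 \<and> q ! i = bits_val bb)"

text \<open>Codewords: lists of length N of bit pairs b[k] = (b_1[k], b_2[k]).\<close>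
definition xor_word :: "(bool \<times> bool) list \<Rightarrow> (bool \<times> bool) list \<Rightarrow> (bool \<times> bool) list" where
  "xor_word b c = map2 (\<lambda>(a1, a2) (c1, c2). (a1 \<noteq> c1, a2 \<noteq> c2)) b c"

definition binary_linear_code :: "nat \<Rightarrow> (bool \<times> bool) list set \<Rightarrow> bool" where
  "binary_linear_code N B \<longleftrightarrow>
     B \<subseteq> {b. length b = N} \<and> replicate N (False, False) \<in> B \<and>
     (\<forall>b\<in>B. \<forall>c\<in>B. xor_word b c \<in> B)"

definition cm_code :: "nat list \<Rightarrow> real \<Rightarrow> (bool \<times> bool) list set \<Rightarrow> real list set" where
  "cm_code q d B = map (labeling q d) ` B"

definition diff_idx :: "real list \<Rightarrow> real list \<Rightarrow> nat set" where
  "diff_idx x y = {k. k < length x \<and> x ! k \<noteq> y ! k}"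

definition mu_X :: "real \<Rightarrow> real \<Rightarrow> real \<Rightarrow> real" where
  "mu_X d u v = (u - v)^2 / (4 * d^2)"

definition sigma2_X :: "real \<Rightarrow> real \<Rightarrow> real \<Rightarrow> real" where
  "sigma2_X d u v = (u - v)^2 / (4 * d^2)"

definition mu_B :: "real \<Rightarrow> real \<Rightarrow> real \<Rightarrow> real" where
  "mu_B d u v = (if {u, v} = {pam d 0, pam d 3} then 3 else (u - v)^2 / (4 * d^2))"

definition sigma2_B :: "real \<Rightarrow> real \<Rightarrow> real \<Rightarrow> real" where
  "sigma2_B d u v = (if {u, v} = {pam d 0, pam d 3} then 1 else (u - v)^2 / (4 * d^2))"

definition a_X :: "real \<Rightarrow> real list \<Rightarrow> real list \<Rightarrow> real" where
  "a_X d x y = (\<Sum>k\<in>diff_idx x y. mu_X d (x ! k) (y ! k))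
              / sqrt (\<Sum>k\<in>diff_idx x y. sigma2_X d (x ! k) (y ! k))"

definition a_B :: "real \<Rightarrow> real list \<Rightarrow> real list \<Rightarrow> real" where
  "a_B d x y = (\<Sum>k\<in>diff_idx x y. mu_B d (x ! k) (y ! k))
              / sqrt (\<Sum>k\<in>diff_idx x y. sigma2_B d (x ! k) (y ! k))"

definition asym_loss :: "real \<Rightarrow> nat list \<Rightarrow> (bool \<times> bool) list set \<Rightarrow> real" where
  "asym_loss d q B =
     (let X = cm_code q d B in
      20 * log 10 (Min {a_X d x y | x y. x \<in> X \<and> y \<in> X \<and> x \<noteq> y}
                 / Min {a_B d x y | x y. x \<in> X \<and> y \<in> X \<and> x \<noteq> y}))"

end

theory Submission
  imports Defs
begin

text \<open>Let \<open>m\<close> mark the outer pair \<open>{s\<^sub>1, s\<^sub>4}\<close>. Symbolwise \<open>\<mu>\<^sup>X = \<sigma>\<^sup>2\<^sub>B + 8m\<close>,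
  \<open>\<mu>\<^sup>B = \<sigma>\<^sup>2\<^sub>B + 2m\<close> and \<open>m \<le> \<sigma>\<^sup>2\<^sub>B\<close>; with \<open>S\<close>, \<open>M\<close> the sums of \<open>\<sigma>\<^sup>2\<^sub>B\<close> and \<open>m\<close> over the
  differing positions, \<open>a\<^sup>B = (S + 2M)/\<surd>S \<le> \<surd>(S + 8M) = a\<^sup>X\<close> for every pair of words, as
  \<open>4M\<^sup>2 \<le> 4MS\<close>. Conversely, for both labelings \<open>\<sigma>\<^sup>2\<^sub>B(\<Phi> a, \<Phi> c)\<close> depends only on \<open>a \<oplus> c\<close>
  and equals \<open>\<mu>\<^sup>X(\<Phi> h, \<Phi>(h \<oplus> a \<oplus> c))\<close> whenever the distinguished bit of \<open>h\<close> is set. As the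
  code is linear and contains \<open>b''\<close>, for codewords \<open>b \<noteq> c\<close> the pair \<open>b'', b'' \<oplus> b \<oplus> c\<close>
  has \<open>a\<^sup>X = \<surd>(\<Sum> \<sigma>\<^sup>2\<^sub>B(\<Phi> b, \<Phi> c)) \<le> a\<^sup>B(\<Phi> b, \<Phi> c)\<close>. So the two minima coincide, and being
  positive their ratio is 1.\<close>

definition outer_pair :: "real \<Rightarrow> real \<Rightarrow> real \<Rightarrow> real" where
  "outer_pair d u v = (if {u, v} = {pam d 0, pam d 3} then 1 else 0)"

lemma outer_pair_sq_dist:
  assumes "d > 0" "{u, v} = {pam d 0, pam d 3}"
  shows "(u - v)^2 / (4 * d^2) = 9"
proof -
  from assms(2) have "(u = pam d 0 \<and> v = pam d 3) \<or> (u = pam d 3 \<and> v = pam d 0)"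
    by (auto simp: doubleton_eq_iff)
  hence "(u - v)^2 = 36 * d^2" by (auto simp: pam_def power2_eq_square algebra_simps)
  thus ?thesis using assms(1) by simp
qed

lemma
  assumes "d > 0"
  shows mu_X_eq_sigma2_B: "mu_X d u v = sigma2_B d u v + 8 * outer_pair d u v"
    and mu_B_eq_sigma2_B: "mu_B d u v = sigma2_B d u v + 2 * outer_pair d u v"
    and outer_pair_le_sigma2_B: "outer_pair d u v \<le> sigma2_B d u v"
    and outer_pair_nonneg: "0 \<le> outer_pair d u v"
  using outer_pair_sq_dist[OF assms, of u v]
  by (auto simp: mu_X_def mu_B_def sigma2_B_def outer_pair_def)

lemma sigma2_B_same: "d > 0 \<Longrightarrow> sigma2_B d u u = 0"
  by (simp add: sigma2_B_def pam_def doubleton_eq_iff)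

lemma a_X_eq_sqrt: "a_X d x y = sqrt (\<Sum>k\<in>diff_idx x y. mu_X d (x ! k) (y ! k))"
proof -
  have "s / sqrt s = sqrt s" if "s \<ge> 0" for s :: real
    using that by (cases "s = 0") (auto simp: real_div_sqrt)
  moreover have "(\<Sum>k\<in>diff_idx x y. mu_X d (x ! k) (y ! k)) \<ge> 0"
    by (intro sum_nonneg) (simp add: mu_X_def)
  ultimately show ?thesis unfolding a_X_def sigma2_X_def mu_X_def by simp
qed

lemma add_div_sqrt_le_sqrt:
  fixes S M :: real
  assumes "0 \<le> M" "M \<le> S"
  shows "(S + 2 * M) / sqrt S \<le> sqrt (S + 8 * M)"
proof (cases "S = 0")
  case False
  with assms have "S > 0" by linarith
  have "(S + 2 * M)^2 \<le> S * (S + 8 * M)"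
    using mult_left_mono[OF assms(2,1)] by (simp add: power2_eq_square algebra_simps)
  hence "S + 2 * M \<le> sqrt S * sqrt (S + 8 * M)"
    by (simp add: real_le_rsqrt flip: real_sqrt_mult)
  with \<open>S > 0\<close> show ?thesis by (simp add: divide_le_eq mult.commute)
qed (use assms in simp)

lemma a_B_le_a_X:
  assumes "d > 0"
  shows "a_B d x y \<le> a_X d x y"
proof -
  let ?I = "diff_idx x y"
  define S where "S = (\<Sum>k\<in>?I. sigma2_B d (x ! k) (y ! k))"
  define M where "M = (\<Sum>k\<in>?I. outer_pair d (x ! k) (y ! k))"
  have "a_B d x y = (S + 2 * M) / sqrt S"
    by (simp add: a_B_def S_def M_def mu_B_eq_sigma2_B[OF assms] sum.distrib sum_distrib_left)
  also have "\<dots> \<le> sqrt (S + 8 * M)"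
    unfolding S_def M_def
    by (intro add_div_sqrt_le_sqrt sum_nonneg sum_mono)
       (simp_all add: outer_pair_nonneg[OF assms] outer_pair_le_sigma2_B[OF assms])
  also have "\<dots> = a_X d x y"
    by (simp add: a_X_eq_sqrt S_def M_def mu_X_eq_sigma2_B[OF assms] sum.distrib sum_distrib_left)
  finally show ?thesis .
qed

lemma sqrt_sum_sigma2_B_le_a_B:
  assumes "d > 0" "0 < (\<Sum>k\<in>diff_idx x y. sigma2_B d (x ! k) (y ! k))"
  shows "sqrt (\<Sum>k\<in>diff_idx x y. sigma2_B d (x ! k) (y ! k)) \<le> a_B d x y"
proof -
  define S where "S = (\<Sum>k\<in>diff_idx x y. sigma2_B d (x ! k) (y ! k))"
  have "S \<le> (\<Sum>k\<in>diff_idx x y. mu_B d (x ! k) (y ! k))"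
    unfolding S_def
    by (intro sum_mono) (simp add: mu_B_eq_sigma2_B[OF assms(1)] outer_pair_nonneg[OF assms(1)])
  moreover have "S > 0" using assms(2) by (simp add: S_def)
  ultimately have "S / sqrt S \<le> (\<Sum>k\<in>diff_idx x y. mu_B d (x ! k) (y ! k)) / sqrt S"
    by (simp add: divide_right_mono)
  with \<open>S > 0\<close> show ?thesis by (simp add: a_B_def S_def real_div_sqrt)
qed

lemma a_X_self: "a_X d x x = 0"
  by (simp add: a_X_def diff_idx_def)

lemma a_X_pos:
  assumes "d \<noteq> 0" "length x = length y" "x \<noteq> y"
  shows "0 < a_X d x y"
proof -
  obtain k where "k < length x" "x ! k \<noteq> y ! k"
    using assms(2,3) nth_equalityI by blast
  then have "k \<in> diff_idx x y" by (simp add: diff_idx_def)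
  then have "0 < (\<Sum>k\<in>diff_idx x y. mu_X d (x ! k) (y ! k))"
    using assms(1) by (intro sum_pos2[of _ k]) (auto simp: diff_idx_def mu_X_def)
  then show ?thesis by (simp add: a_X_eq_sqrt)
qed

lemma sum_diff_idx_eq_sum_lessThan:
  assumes "length x = length y" "\<And>u. f u u = 0"
  shows "(\<Sum>k\<in>diff_idx x y. f (x ! k) (y ! k)) = (\<Sum>k<length x. f (x ! k) (y ! k))"
  by (rule sum.mono_neutral_left) (auto simp: diff_idx_def assms)

lemma finite_pairs: "finite X \<Longrightarrow> finite {f x y |x y. x \<in> X \<and> y \<in> X \<and> x \<noteq> y}"
  by (rule finite_subset[of _ "case_prod f ` (X \<times> X)"]) auto

lemma Min_pairs_le:
  fixes f g :: "'a \<Rightarrow> 'a \<Rightarrow> 'b::linorder"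
  assumes "finite X" "x\<^sub>0 \<in> X" "y\<^sub>0 \<in> X" "x\<^sub>0 \<noteq> y\<^sub>0"
    and f_le_g: "\<And>x y. x \<in> X \<Longrightarrow> y \<in> X \<Longrightarrow> x \<noteq> y \<Longrightarrow>
                   \<exists>x'\<in>X. \<exists>y'\<in>X. x' \<noteq> y' \<and> f x' y' \<le> g x y"
  shows "Min {f x y |x y. x \<in> X \<and> y \<in> X \<and> x \<noteq> y} \<le> Min {g x y |x y. x \<in> X \<and> y \<in> X \<and> x \<noteq> y}"
proof -
  let ?F = "{f x y |x y. x \<in> X \<and> y \<in> X \<and> x \<noteq> y}"
  let ?G = "{g x y |x y. x \<in> X \<and> y \<in> X \<and> x \<noteq> y}"
  note fin = finite_pairs[OF assms(1)]
  have "?G \<noteq> {}" using assms(2-4) by blast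
  then obtain x y where xy: "x \<in> X" "y \<in> X" "x \<noteq> y" "Min ?G = g x y"
    using Min_in[OF fin] by blast
  then obtain x' y' where x'y': "x' \<in> X" "y' \<in> X" "x' \<noteq> y'" "f x' y' \<le> g x y"
    using f_le_g by blast
  have "Min ?F \<le> f x' y'"
    by (rule Min_le[OF fin]) (use x'y' in blast)
  with x'y' xy show ?thesis by simp
qed

lemma Min_pairs_eq:
  fixes f g :: "'a \<Rightarrow> 'a \<Rightarrow> 'b::linorder"
  assumes "finite X" "x\<^sub>0 \<in> X" "y\<^sub>0 \<in> X" "x\<^sub>0 \<noteq> y\<^sub>0"
    and "\<And>x y. x \<in> X \<Longrightarrow> y \<in> X \<Longrightarrow> x \<noteq> y \<Longrightarrow> g x y \<le> f x y"
    and "\<And>x y. x \<in> X \<Longrightarrow> y \<in> X \<Longrightarrow> x \<noteq> y \<Longrightarrow>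
           \<exists>x'\<in>X. \<exists>y'\<in>X. x' \<noteq> y' \<and> f x' y' \<le> g x y"
  shows "Min {f x y |x y. x \<in> X \<and> y \<in> X \<and> x \<noteq> y} = Min {g x y |x y. x \<in> X \<and> y \<in> X \<and> x \<noteq> y}"
proof (rule antisym)
  show "Min {f x y |x y. x \<in> X \<and> y \<in> X \<and> x \<noteq> y} \<le> Min {g x y |x y. x \<in> X \<and> y \<in> X \<and> x \<noteq> y}"
    by (rule Min_pairs_le[OF assms(1-4)]) (rule assms(6))
  show "Min {g x y |x y. x \<in> X \<and> y \<in> X \<and> x \<noteq> y} \<le> Min {f x y |x y. x \<in> X \<and> y \<in> X \<and> x \<noteq> y}"
    by (rule Min_pairs_le[OF assms(1-4)]) (use assms(5) in blast)
qed

lemma Min_pairs_gt: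
  fixes f :: "'a \<Rightarrow> 'a \<Rightarrow> 'b::linorder"
  assumes "finite X" "x\<^sub>0 \<in> X" "y\<^sub>0 \<in> X" "x\<^sub>0 \<noteq> y\<^sub>0"
    and "\<And>x y. x \<in> X \<Longrightarrow> y \<in> X \<Longrightarrow> x \<noteq> y \<Longrightarrow> m < f x y"
  shows "m < Min {f x y |x y. x \<in> X \<and> y \<in> X \<and> x \<noteq> y}"
  using assms by (subst Min_gr_iff) (auto simp: finite_pairs)

definition xor_bits :: "bool \<times> bool \<Rightarrow> bool \<times> bool \<Rightarrow> bool \<times> bool" where
  "xor_bits a c = (fst a \<noteq> fst c, snd a \<noteq> snd c)"

lemma length_xor_word: "length (xor_word b c) = min (length b) (length c)"
  by (simp add: xor_word_def)

lemma nth_xor_word: "k < length b \<Longrightarrow> k < length c \<Longrightarrow> xor_word b c ! k = xor_bits (b ! k) (c ! k)"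
  by (simp add: xor_word_def xor_bits_def split: prod.splits)

text \<open>Under either labeling, \<open>\<sigma>\<^sup>2\<^sub>B\<close> between the labels of \<open>a\<close> and \<open>c\<close> is the weight of \<open>a \<oplus> c\<close>.\<close>
definition bits_weight :: "bool \<times> bool \<Rightarrow> real" where
  "bits_weight e = (if e = (False, False) then 0 else if e = (True, True) then 4 else 1)"

definition word_weight :: "(bool \<times> bool) list \<Rightarrow> real" where
  "word_weight e = (\<Sum>k<length e. bits_weight (e ! k))"

lemma bits_weight_xor_bits_pos: "a \<noteq> c \<Longrightarrow> 0 < bits_weight (xor_bits a c)"
  by (cases a; cases c) (auto simp: bits_weight_def xor_bits_def)

lemma bits_weight_xor_bits_swap: "bits_weight (xor_bits (prod.swap a) (prod.swap c)) = bits_weight (xor_bits a c)"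
  by (cases a; cases c) (auto simp: bits_weight_def xor_bits_def)

lemma word_weight_xor_word_pos:
  assumes "length b = length c" "b \<noteq> c"
  shows "0 < word_weight (xor_word b c)"
proof -
  obtain k where k: "k < length b" "b ! k \<noteq> c ! k"
    using assms nth_equalityI by blast
  then have "0 < bits_weight (xor_word b c ! k)"
    using assms(1) by (simp add: nth_xor_word bits_weight_xor_bits_pos)
  then show ?thesis
    unfolding word_weight_def
    by (intro sum_pos2[of _ k]) (use k assms(1) in \<open>auto simp: length_xor_word bits_weight_def\<close>)
qed

lemma inj_labeling_if_sigma2_B:
  assumes "d > 0" "\<And>a c. sigma2_B d (L a) (L c) = bits_weight (xor_bits a c)"
  shows "inj L"
proof (rule injI)
  fix a c assume "L a = L c"
  have "bits_weight (xor_bits a c) = sigma2_B d (L a) (L c)"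
    by (rule assms(2)[symmetric])
  also have "\<dots> = 0"
    unfolding \<open>L a = L c\<close> by (rule sigma2_B_same[OF assms(1)])
  finally show "a = c"
    using bits_weight_xor_bits_pos[of a c] by linarith
qed

lemma sqrt_word_weight_le_a_B:
  assumes "d > 0" "\<And>a c. sigma2_B d (L a) (L c) = bits_weight (xor_bits a c)"
    and "length b = length c" "b \<noteq> c"
  shows "sqrt (word_weight (xor_word b c)) \<le> a_B d (map L b) (map L c)"
proof -
  have "(\<Sum>k\<in>diff_idx (map L b) (map L c). sigma2_B d (map L b ! k) (map L c ! k))
      = (\<Sum>k<length b. sigma2_B d (map L b ! k) (map L c ! k))"
    using assms(3) by (subst sum_diff_idx_eq_sum_lessThan) (simp_all add: sigma2_B_same[OF assms(1)])
  also have "\<dots> = word_weight (xor_word b c)"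
    using assms(2,3) by (simp add: word_weight_def length_xor_word nth_xor_word)
  finally show ?thesis
    using sqrt_sum_sigma2_B_le_a_B[OF assms(1), of "map L b" "map L c"] word_weight_xor_word_pos[OF assms(3,4)]
    by simp
qed

lemma a_X_map_xor_word:
  assumes "\<And>h e. P h \<Longrightarrow> mu_X d (L h) (L (xor_bits h e)) = bits_weight e"
    and "\<forall>k<length g. P (g ! k)" "length e = length g"
  shows "a_X d (map L g) (map L (xor_word g e)) = sqrt (word_weight e)"
proof -
  have "(\<Sum>k\<in>diff_idx (map L g) (map L (xor_word g e)). mu_X d (map L g ! k) (map L (xor_word g e) ! k))
      = (\<Sum>k<length g. mu_X d (map L g ! k) (map L (xor_word g e) ! k))"
    using assms(3) by (subst sum_diff_idx_eq_sum_lessThan) (simp_all add: length_xor_word mu_X_def)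
  also have "\<dots> = word_weight e"
    using assms by (simp add: word_weight_def length_xor_word nth_xor_word)
  finally show ?thesis by (simp add: a_X_eq_sqrt)
qed

lemma labeling_eq_pam:
  assumes "distinct q" "length q = 4" "i < 4" "q ! i = bits_val bb"
  shows "labeling q d bb = pam d i"
proof -
  have "(THE i. i < 4 \<and> q ! i = bits_val bb) = i"
    using assms by (intro the_equality) (auto, metis nth_eq_iff_index_eq)
  then show ?thesis by (simp add: labeling_def)
qed

lemma labeling_0132:
  "labeling [0, 1, 3, 2] d (False, False) = -3 * d"
  "labeling [0, 1, 3, 2] d (False, True) = -d"
  "labeling [0, 1, 3, 2] d (True, True) = d"
  "labeling [0, 1, 3, 2] d (True, False) = 3 * d"
  by (subst labeling_eq_pam[where i = 0] labeling_eq_pam[where i = 1] labeling_eq_pam[where i = 2]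
      labeling_eq_pam[where i = 3]; simp add: bits_val_def pam_def)+

lemma labeling_0231:
  "labeling [0, 2, 3, 1] d (False, False) = -3 * d"
  "labeling [0, 2, 3, 1] d (True, False) = -d"
  "labeling [0, 2, 3, 1] d (True, True) = d"
  "labeling [0, 2, 3, 1] d (False, True) = 3 * d"
  by (subst labeling_eq_pam[where i = 0] labeling_eq_pam[where i = 1] labeling_eq_pam[where i = 2]
      labeling_eq_pam[where i = 3]; simp add: bits_val_def pam_def)+

lemma labeling_0231_eq_swap: "labeling [0, 2, 3, 1] d a = labeling [0, 1, 3, 2] d (prod.swap a)"
proof -
  obtain a1 a2 where "a = (a1, a2)" by fastforce
  then show ?thesis
    by (cases a1; cases a2)
       (simp_all add: labeling_0132 labeling_0231 del: One_nat_def)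
qed

lemma sigma2_B_labeling_0132:
  assumes "d > 0"
  shows "sigma2_B d (labeling [0, 1, 3, 2] d a) (labeling [0, 1, 3, 2] d c) = bits_weight (xor_bits a c)"
proof -
  obtain a1 a2 c1 c2 where "a = (a1, a2)" "c = (c1, c2)" by fastforce
  with assms show ?thesis
    by (cases a1; cases a2; cases c1; cases c2)
       (simp_all add: labeling_0132 sigma2_B_def pam_def doubleton_eq_iff bits_weight_def xor_bits_def
         power2_eq_square field_simps del: One_nat_def)
qed

text \<open>The labels \<open>\<Phi>(h)\<close> with second bit set are the inner points \<open>s\<^sub>2, s\<^sub>3\<close>, so a flip never
  connects \<open>s\<^sub>1\<close> with \<open>s\<^sub>4\<close> and \<open>\<mu>\<^sup>X\<close> agrees with \<open>\<sigma>\<^sup>2\<^sub>B\<close>.\<close>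
lemma mu_X_labeling_0132:
  assumes "d > 0" "snd h"
  shows "mu_X d (labeling [0, 1, 3, 2] d h) (labeling [0, 1, 3, 2] d (xor_bits h e)) = bits_weight e"
proof -
  obtain h1 e1 e2 where "h = (h1, True)" "e = (e1, e2)"
    using assms(2) by (cases h, cases e) auto
  with assms(1) show ?thesis
    by (cases h1; cases e1; cases e2)
       (simp_all add: labeling_0132 mu_X_def bits_weight_def xor_bits_def power2_eq_square field_simps
         del: One_nat_def)
qed

lemma sigma2_B_labeling_0231:
  "d > 0 \<Longrightarrow> sigma2_B d (labeling [0, 2, 3, 1] d a) (labeling [0, 2, 3, 1] d c) = bits_weight (xor_bits a c)"
  unfolding labeling_0231_eq_swap
  by (simp add: sigma2_B_labeling_0132 bits_weight_xor_bits_swap del: One_nat_def)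

lemma mu_X_labeling_0231:
  assumes "d > 0" "fst h"
  shows "mu_X d (labeling [0, 2, 3, 1] d h) (labeling [0, 2, 3, 1] d (xor_bits h e)) = bits_weight e"
proof -
  have "prod.swap (xor_bits h e) = xor_bits (prod.swap h) (prod.swap e)"
    by (simp add: xor_bits_def)
  moreover have "bits_weight (prod.swap e) = bits_weight e"
    by (cases e) (auto simp: bits_weight_def)
  ultimately show ?thesis
    using mu_X_labeling_0132[OF assms(1), of "prod.swap h" "prod.swap e"] assms(2)
    unfolding labeling_0231_eq_swap by (simp del: One_nat_def)
qed

lemma
  assumes "binary_linear_code N B"
  shows binary_linear_code_length: "b \<in> B \<Longrightarrow> length b = N"
    and binary_linear_code_xor_word: "b \<in> B \<Longrightarrow> c \<in> B \<Longrightarrow> xor_word b c \<in> B"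
    and binary_linear_code_finite: "finite B"
  using assms finite_subset[OF _ finite_lists_length_eq[OF finite, of UNIV N]]
  by (auto simp: binary_linear_code_def)

lemma binary_linear_code_a_X_le_a_B:
  assumes "d > 0" and code: "binary_linear_code N B"
    and "g \<in> B" "\<forall>k<N. P (g ! k)" and bc: "b \<in> B" "c \<in> B" "b \<noteq> c"
    and sigma: "\<And>a c. sigma2_B d (L a) (L c) = bits_weight (xor_bits a c)"
    and mu: "\<And>h e. P h \<Longrightarrow> mu_X d (L h) (L (xor_bits h e)) = bits_weight e"
  shows "\<exists>g'\<in>B. map L g \<noteq> map L g' \<and> a_X d (map L g) (map L g') \<le> a_B d (map L b) (map L c)"
proof
  define g' where "g' = xor_word g (xor_word b c)"
  show "g' \<in> B"
    using assms(3) bc by (simp add: g'_def binary_linear_code_xor_word[OF code])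
  note len = binary_linear_code_length[OF code]
  have a_X_eq: "a_X d (map L g) (map L g') = sqrt (word_weight (xor_word b c))"
    unfolding g'_def using assms(3,4) mu bc len
    by (intro a_X_map_xor_word[where P = P]) (auto simp: length_xor_word)
  have "0 < sqrt (word_weight (xor_word b c))"
    using word_weight_xor_word_pos[of b c] bc len by simp
  with a_X_eq have "map L g \<noteq> map L g'"
    by (auto simp: a_X_self)
  moreover have "a_X d (map L g) (map L g') \<le> a_B d (map L b) (map L c)"
    using a_X_eq sqrt_word_weight_le_a_B[OF assms(1) sigma] bc len by simp
  ultimately show "map L g \<noteq> map L g' \<and> a_X d (map L g) (map L g') \<le> a_B d (map L b) (map L c)" ..
qed

lemma asym_loss_eq_0:
  assumes "d > 0" and code: "binary_linear_code N B"
    and "b\<^sub>0 \<in> B" "c\<^sub>0 \<in> B" "b\<^sub>0 \<noteq> c\<^sub>0" and "g \<in> B" "\<forall>k<N. P (g ! k)"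
    and sigma: "\<And>a c. sigma2_B d (labeling q d a) (labeling q d c) = bits_weight (xor_bits a c)"
    and mu: "\<And>h e. P h \<Longrightarrow> mu_X d (labeling q d h) (labeling q d (xor_bits h e)) = bits_weight e"
  shows "asym_loss d q B = 0"
proof -
  define X where "X = map (labeling q d) ` B"
  have "finite X" by (simp add: X_def binary_linear_code_finite[OF code])
  have "inj (map (labeling q d))"
    using inj_labeling_if_sigma2_B[OF assms(1) sigma] by (rule inj_mapI)
  then have X_pair: "\<exists>b\<in>B. \<exists>c\<in>B. b \<noteq> c \<and> x = map (labeling q d) b \<and> y = map (labeling q d) c"
    if "x \<in> X" "y \<in> X" "x \<noteq> y" for x y
    using that by (auto simp: X_def)
  have x\<^sub>0y\<^sub>0: "map (labeling q d) b\<^sub>0 \<in> X" "map (labeling q d) c\<^sub>0 \<in> X"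
    "map (labeling q d) b\<^sub>0 \<noteq> map (labeling q d) c\<^sub>0"
    using assms(3-5) \<open>inj (map (labeling q d))\<close> by (auto simp: X_def inj_eq)
  have "Min {a_X d x y |x y. x \<in> X \<and> y \<in> X \<and> x \<noteq> y} = Min {a_B d x y |x y. x \<in> X \<and> y \<in> X \<and> x \<noteq> y}"
  proof (rule Min_pairs_eq[OF \<open>finite X\<close> x\<^sub>0y\<^sub>0])
    fix x y assume "x \<in> X" "y \<in> X" "x \<noteq> y"
    then obtain b c where "b \<in> B" "c \<in> B" "b \<noteq> c" "x = map (labeling q d) b" "y = map (labeling q d) c"
      using X_pair by blast
    then obtain g' where "g' \<in> B" "map (labeling q d) g \<noteq> map (labeling q d) g'"
      "a_X d (map (labeling q d) g) (map (labeling q d) g') \<le> a_B d x y"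
      using binary_linear_code_a_X_le_a_B[OF assms(1,2,6,7) _ _ _ sigma mu] by blast
    then show "\<exists>x'\<in>X. \<exists>y'\<in>X. x' \<noteq> y' \<and> a_X d x' y' \<le> a_B d x y"
      using assms(6) unfolding X_def by blast
  qed (rule a_B_le_a_X[OF assms(1)])
  moreover have "0 < Min {a_X d x y |x y. x \<in> X \<and> y \<in> X \<and> x \<noteq> y}"
  proof (rule Min_pairs_gt[OF \<open>finite X\<close> x\<^sub>0y\<^sub>0])
    fix x y assume "x \<in> X" "y \<in> X" "x \<noteq> y"
    then obtain b c where "b \<in> B" "c \<in> B" "x = map (labeling q d) b" "y = map (labeling q d) c"
      using X_pair by blast
    with \<open>x \<noteq> y\<close> show "0 < a_X d x y"
      using assms(1) by (intro a_X_pos) (simp_all add: binary_linear_code_length[OF code])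
  qed
  ultimately show ?thesis by (simp add: asym_loss_def cm_code_def X_def)
qed

theorem theorem3:
  fixes d :: real and N :: nat and B :: "(bool \<times> bool) list set"
  assumes "d > 0"
    and "binary_linear_code N B"
    and "\<exists>b\<in>B. \<exists>c\<in>B. b \<noteq> c"
  shows "((\<exists>b\<in>B. \<forall>k<N. snd (b ! k)) \<longrightarrow> asym_loss d [0, 1, 3, 2] B = 0)
       \<and> ((\<exists>b\<in>B. \<forall>k<N. fst (b ! k)) \<longrightarrow> asym_loss d [0, 2, 3, 1] B = 0)"
proof -
  obtain b\<^sub>0 c\<^sub>0 where bc: "b\<^sub>0 \<in> B" "c\<^sub>0 \<in> B" "b\<^sub>0 \<noteq> c\<^sub>0" using assms(3) by blast
  show ?thesis
  proof (intro conjI impI; elim bexE)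
    fix g assume "g \<in> B" "\<forall>k<N. snd (g ! k)"
    with assms(1,2) bc show "asym_loss d [0, 1, 3, 2] B = 0"
      by (intro asym_loss_eq_0[where P = snd])
         (simp_all add: sigma2_B_labeling_0132 mu_X_labeling_0132 del: One_nat_def)
  next
    fix g assume "g \<in> B" "\<forall>k<N. fst (g ! k)"
    with assms(1,2) bc show "asym_loss d [0, 2, 3, 1] B = 0"
      by (intro asym_loss_eq_0[where P = fst])
         (simp_all add: sigma2_B_labeling_0231 mu_X_labeling_0231 del: One_nat_def)
  qed
qed

end
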